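(* Let $(\mathcal{M},\mathrm{dist})$ be a metric space, $\mathcal{F}\subset2^{\mathcal{M}}$, and $J:\mathcal{M}\to\mathbb{R}\cup\{+\infty\}$ lower semi-continuous with $c=\inf_{A\in\mathcal{F}}\sup_{x\in A}J(x)\in\mathbb{R}$. Assume (F2): there is $c'>c$ such that for every sequence $(A_n)\subset\mathcal{F}$ with $A_n\subset\{x\in\mathcal{M}:J(x)\le c'\}$ for all $n$, $\limsup_nA_n\in\mathcal{F}$. Then there exists $\bar A\in\mathcal{F}$ with $\sup_{\bar A}J=c$.
   Context: For sets $A_n\subset\mathcal{M}$, $\limsup_nA_n$ is the set of $x\in\mathcal{M}$ such that for some $n_j\to\infty$ there are $x_{n_j}\in A_{n_j}$ with $x_{n_j}\to x$. *)

theory Defs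
  imports "HOL-Analysis.Analysis"
begin

definition lower_semicontinuous :: "('a::topological_space \<Rightarrow> ereal) \<Rightarrow> bool" where
  "lower_semicontinuous J \<longleftrightarrow> (\<forall>x. \<forall>t. t < J x \<longrightarrow> eventually (\<lambda>y. t < J y) (nhds x))"

definition limsup_sets :: "(nat \<Rightarrow> 'a::metric_space set) \<Rightarrow> 'a set" where
  "limsup_sets A = {x. \<exists>r y. strict_mono r \<and> (\<forall>j. y j \<in> A (r j)) \<and> y \<longlonglongrightarrow> x}"

end

theory Submission
  imports Defs
begin

text \<open>Take \<open>A\<^sub>n \<in> \<F>\<close> with \<open>sup\<^bsub>A\<^sub>n\<^esub> J < c + (c' - c)/(n+1)\<close>, where \<open>c'\<close> is the level of (F2).
  All \<open>A\<^sub>n\<close> lie in \<open>{J \<le> c'}\<close>, so \<open>limsup A\<^sub>n \<in> \<F>\<close>; lower semicontinuity of \<open>J\<close>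
  along the approximating sequences gives \<open>J \<le> c\<close> on \<open>limsup A\<^sub>n\<close>, and the reverse bound
  holds because \<open>c\<close> is the infimum over \<open>\<F>\<close>.\<close>

lemma lower_semicontinuous_le_limit:
  fixes J :: "'a::topological_space \<Rightarrow> ereal" and b :: "nat \<Rightarrow> real"
  assumes "lower_semicontinuous J" and "y \<longlonglongrightarrow> x" and "b \<longlonglongrightarrow> \<beta>"
    and "\<And>j. J (y j) \<le> ereal (b j)"
  shows "J x \<le> ereal \<beta>"
proof (rule ccontr)
  assume "\<not> J x \<le> ereal \<beta>"
  then obtain t where "\<beta> < t" and "ereal t < J x"
    by (metis ereal_dense2 ereal_less(2) less_ereal.simps(1) not_le)
  have "eventually (\<lambda>z. ereal t < J z) (nhds x)"
    using assms(1) \<open>ereal t < J x\<close> unfolding lower_semicontinuous_def by blast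
  then have "eventually (\<lambda>j. ereal t < J (y j)) sequentially"
    using assms(2) by (rule eventually_compose_filterlim)
  moreover have "eventually (\<lambda>j. b j < t) sequentially"
    using assms(3) \<open>\<beta> < t\<close> by (rule order_tendstoD)
  ultimately have "eventually (\<lambda>j. False) sequentially"
  proof eventually_elim
    case (elim j)
    then show False
      using assms(4)[of j] by (metis less_ereal.simps(1) leD order.strict_trans order_le_less_trans)
  qed
  then show False
    by simp
qed

lemma limsup_sets_sublevel:
  fixes J :: "'a::metric_space \<Rightarrow> ereal" and b :: "nat \<Rightarrow> real"
  assumes "lower_semicontinuous J" and "b \<longlonglongrightarrow> \<beta>"
    and "\<And>n x. x \<in> A n \<Longrightarrow> J x \<le> ereal (b n)"
    and "x \<in> limsup_sets A"
  shows "J x \<le> ereal \<beta>"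
proof -
  obtain r y where "strict_mono r" and "\<And>j. y j \<in> A (r j)" and "y \<longlonglongrightarrow> x"
    using assms(4) unfolding limsup_sets_def by blast
  moreover have "(b \<circ> r) \<longlonglongrightarrow> \<beta>"
    using assms(2) \<open>strict_mono r\<close> by (rule LIMSEQ_subseq_LIMSEQ)
  ultimately show ?thesis
    using assms(1,3) by (intro lower_semicontinuous_le_limit[of J y x "b \<circ> r"]) auto
qed

theorem proposition2p1:
  fixes \<F> :: "'a::metric_space set set"
    and J :: "'a \<Rightarrow> ereal"
    and c :: real
  assumes J_not_minf: "\<And>x. J x \<noteq> -\<infinity>"
    and J_lsc: "lower_semicontinuous J"
    and c_def: "(INF A\<in>\<F>. SUP x\<in>A. J x) = ereal c"
    and F2: "\<exists>c'::real. c' > c \<and>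
      (\<forall>A :: nat \<Rightarrow> 'a set. (\<forall>n. A n \<in> \<F>) \<and> (\<forall>n. A n \<subseteq> {x. J x \<le> ereal c'})
          \<longrightarrow> limsup_sets A \<in> \<F>)"
  shows "\<exists>Abar\<in>\<F>. (SUP x\<in>Abar. J x) = ereal c"
proof -
  obtain c' where "c' > c" and F2': "\<And>A. \<forall>n. A n \<in> \<F> \<Longrightarrow> \<forall>n. A n \<subseteq> {x. J x \<le> ereal c'}
      \<Longrightarrow> limsup_sets A \<in> \<F>"
    using F2 by blast
  define b where "b n = c + (c' - c) * inverse (real (Suc n))" for n
  have "b n \<le> c'" for n
  proof -
    have "(c' - c) * inverse (real (Suc n)) \<le> (c' - c) * 1"
      using \<open>c' > c\<close> by (intro mult_left_mono) (auto simp: inverse_le_1_iff)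
    then show ?thesis
      by (simp add: b_def)
  qed
  have "c < b n" for n
    using \<open>c' > c\<close> by (simp add: b_def)
  have "b \<longlonglongrightarrow> c"
    using tendsto_add[OF tendsto_const tendsto_mult_left_zero[OF LIMSEQ_inverse_real_of_nat]]
    by (simp add: b_def[abs_def] mult.commute)
  have "\<exists>A\<in>\<F>. (SUP x\<in>A. J x) < ereal (b n)" for n
    using \<open>c < b n\<close> c_def INF_less_iff[of "\<lambda>A. SUP x\<in>A. J x" \<F> "ereal (b n)"] by simp
  then obtain A where A: "\<And>n. A n \<in> \<F>" and "\<And>n. (SUP x\<in>A n. J x) < ereal (b n)"
    by metis
  then have A_le: "J x \<le> ereal (b n)" if "x \<in> A n" for n x
    by (meson SUP_upper less_imp_le order_trans that)
  have "A n \<subseteq> {x. J x \<le> ereal c'}" for n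
    using A_le \<open>b n \<le> c'\<close> by (metis CollectI ereal_less_eq(3) order_trans subsetI)
  then have "limsup_sets A \<in> \<F>"
    using A F2' by blast
  moreover have "(SUP x\<in>limsup_sets A. J x) \<le> ereal c"
    using limsup_sets_sublevel[OF J_lsc \<open>b \<longlonglongrightarrow> c\<close> A_le] by (simp add: SUP_le_iff)
  moreover have "ereal c \<le> (SUP x\<in>limsup_sets A. J x)"
    using c_def \<open>limsup_sets A \<in> \<F>\<close> by (metis INF_lower)
  ultimately show ?thesis
    by (intro bexI[of _ "limsup_sets A"]) auto
qed

end
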